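(* Suppose that the "bounded polynomials have influential variables" conjecture (stated in the context) holds, and let $\varepsilon,\delta>0$. Then given any quantum algorithm $Q$ that makes $T$ queries to a Boolean input $X\in\{0,1\}^N$, there exists a deterministic classical algorithm that makes $\mathrm{poly}(T,1/\varepsilon,1/\delta)$ queries, and that approximates $Q$'s acceptance probability to within an additive constant $\varepsilon$ on a $1-\delta$ fraction of inputs $X\in\{0,1\}^N$.
   Context: For a real polynomial $p:\mathbb{R}^N\to\mathbb{R}$ and $X\in\{0,1\}^N$, let $X^i$ denote $X$ with the $i$-th bit flipped. Define the $L_1$-variance $\mathrm{Vr}[p]:=\mathrm{E}_{X,Y\in\{0,1\}^N}[|p(X)-p(Y)|]$ and the influence of the $i$-th variable $\mathrm{Inf}_i[p]:=\mathrm{E}_{X\in\{0,1\}^N}[|p(X)-p(X^i)|]$. The conjecture ("bounded polynomials have influential variables"): for every polynomial $p:\mathbb{R}^N\to\mathbb{R}$ of degree $d$ such that $0\le p(X)\le 1$ for all $X\in\{0,1\}^N$ and $\mathrm{Vr}[p]\ge\varepsilon$, there exists an $i\in[N]$ such that $\mathrm{Inf}_i[p]\ge(\varepsilon/d)^{O(1)}$. *)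

theory Defs
  imports Complex_Main
begin

text \<open>Points of R^N are functions nat => real (coordinates 0..N-1; the others are ignored /
  set to 0 on the cube). The Boolean cube {0,1}^N.\<close>
definition cube :: "nat \<Rightarrow> (nat \<Rightarrow> real) set" where
  "cube N = {x. (\<forall>i<N. x i = 0 \<or> x i = 1) \<and> (\<forall>i\<ge>N. x i = 0)}"

definition flip :: "nat \<Rightarrow> (nat \<Rightarrow> real) \<Rightarrow> (nat \<Rightarrow> real)" where
  "flip i x = x(i := 1 - x i)"

definition is_poly :: "nat \<Rightarrow> nat \<Rightarrow> ((nat \<Rightarrow> real) \<Rightarrow> real) \<Rightarrow> bool" where
  "is_poly N d p \<longleftrightarrow> (\<exists>A :: (nat \<Rightarrow> nat) set. \<exists>c :: (nat \<Rightarrow> nat) \<Rightarrow> real.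
      finite A \<and> (\<forall>\<alpha>\<in>A. (\<forall>i\<ge>N. \<alpha> i = 0) \<and> (\<Sum>i<N. \<alpha> i) \<le> d) \<and>
      (\<forall>x. p x = (\<Sum>\<alpha>\<in>A. c \<alpha> * (\<Prod>i<N. x i ^ \<alpha> i))))"

definition Vr :: "nat \<Rightarrow> ((nat \<Rightarrow> real) \<Rightarrow> real) \<Rightarrow> real" where
  "Vr N p = (\<Sum>x\<in>cube N. \<Sum>y\<in>cube N. \<bar>p x - p y\<bar>) / (2 ^ N * 2 ^ N)"

definition Inf :: "nat \<Rightarrow> nat \<Rightarrow> ((nat \<Rightarrow> real) \<Rightarrow> real) \<Rightarrow> real" where
  "Inf N i p = (\<Sum>x\<in>cube N. \<bar>p x - p (flip i x)\<bar>) / 2 ^ N"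

definition bpiv_conjecture :: bool where
  "bpiv_conjecture \<longleftrightarrow> (\<exists>c::real > 0. \<forall>N d p \<epsilon>.
      d \<ge> 1 \<longrightarrow> \<epsilon> > 0 \<longrightarrow> is_poly N d p \<longrightarrow>
      (\<forall>x\<in>cube N. 0 \<le> p x \<and> p x \<le> 1) \<longrightarrow> Vr N p \<ge> \<epsilon> \<longrightarrow>
      (\<exists>i<N. Inf N i p \<ge> (\<epsilon> / real d) powr c))"

text \<open>Computational basis: pairs (i, w), i in {0..N} the query register (i = 0 is the
  null query, i >= 1 queries bit x_(i-1)), w in {0..<M} the workspace.\<close>
definition qbasis :: "nat \<Rightarrow> nat \<Rightarrow> (nat \<times> nat) set" where
  "qbasis N M = {0..N} \<times> {0..<M}"

type_synonym qstate = "nat \<times> nat \<Rightarrow> complex"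
type_synonym qop = "nat \<times> nat \<Rightarrow> nat \<times> nat \<Rightarrow> complex"

definition unitary_on :: "(nat \<times> nat) set \<Rightarrow> qop \<Rightarrow> bool" where
  "unitary_on B U \<longleftrightarrow> (\<forall>a\<in>B. \<forall>b\<in>B.
      (\<Sum>k\<in>B. cnj (U k a) * U k b) = (if a = b then 1 else 0))"

definition apply_op :: "(nat \<times> nat) set \<Rightarrow> qop \<Rightarrow> qstate \<Rightarrow> qstate" where
  "apply_op B U v = (\<lambda>a. \<Sum>b\<in>B. U a b * v b)"

definition query_op :: "nat \<Rightarrow> (nat \<Rightarrow> real) \<Rightarrow> qstate \<Rightarrow> qstate" where
  "query_op N x v = (\<lambda>(i, w). if 1 \<le> i \<and> i \<le> N \<and> x (i - 1) = 1 then - v (i, w) else v (i, w))"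

primrec qrun :: "nat \<Rightarrow> nat \<Rightarrow> (nat \<Rightarrow> qop) \<Rightarrow> (nat \<Rightarrow> real) \<Rightarrow> nat \<Rightarrow> qstate" where
  "qrun N M Us x 0 = apply_op (qbasis N M) (Us 0) (\<lambda>a. if a = (0, 0) then 1 else 0)"
| "qrun N M Us x (Suc t) = apply_op (qbasis N M) (Us (Suc t)) (query_op N x (qrun N M Us x t))"

definition acc_prob :: "nat \<Rightarrow> nat \<Rightarrow> (nat \<Rightarrow> qop) \<Rightarrow> (nat \<times> nat) set \<Rightarrow> nat \<Rightarrow> (nat \<Rightarrow> real) \<Rightarrow> real" where
  "acc_prob N M Us Acc T x = (\<Sum>a\<in>Acc. (cmod (qrun N M Us x T a))\<^sup>2)"

datatype dtree = Leaf real | Query nat dtree dtree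

fun dt_eval :: "dtree \<Rightarrow> (nat \<Rightarrow> real) \<Rightarrow> real" where
  "dt_eval (Leaf r) x = r"
| "dt_eval (Query i t0 t1) x = (if x i = 0 then dt_eval t0 x else dt_eval t1 x)"

fun dt_depth :: "dtree \<Rightarrow> nat" where
  "dt_depth (Leaf r) = 0"
| "dt_depth (Query i t0 t1) = Suc (max (dt_depth t0) (dt_depth t1))"

end

theory Submission
  imports Defs "HOL-Analysis.Convex" "HOL-Library.Indicator_Function"
begin

text \<open>The acceptance probability \<open>f\<close> of a \<open>T\<close>-query algorithm agrees on the cube with a
  multilinear polynomial of degree at most \<open>2T\<close> with values in \<open>[0,1]\<close> (each query contributes a
  factor of degree one to the amplitudes), and so does each restriction of \<open>f\<close> to a subcube.
  The classical algorithm walks down a decision tree. On the current subcube it outputs the mean of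
  \<open>f\<close> if the \<open>L\<^sub>1\<close>-variance there is below \<open>\<epsilon>\<delta>/2\<close>; by Markov's inequality the mean is then
  \<open>\<epsilon>\<close>-close to \<open>f\<close> on all but a \<open>\<delta>/2\<close> fraction of the subcube. Otherwise the conjecture provides
  a variable of influence at least \<open>\<tau> = (\<epsilon>\<delta>/(2(2T+1)))^c\<close> on the subcube, which is queried next.
  By Cauchy-Schwarz each such query uses up at least \<open>\<tau>\<^sup>2\<close> times the size of the subcube of the
  energy \<open>\<Sum>\<^sub>k \<Sum>\<^sub>x (f x - f x\<^sup>k)\<^sup>2\<close>, which by Parseval is at most \<open>4(2T+1)2\<^sup>N\<close> in total.
  Hence after \<open>O(T/(\<tau>\<^sup>2\<delta>))\<close> levels at most a \<open>\<delta>/2\<close> fraction of the inputs lies in subcubes that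
  still have large variance.\<close>

section \<open>Parities and Fourier degree\<close>

lemma cube_eq_indicator_image: "cube N = (\<lambda>S. indicator S :: nat \<Rightarrow> real) ` Pow {..<N}"
proof
  show "cube N \<subseteq> (\<lambda>S. indicator S) ` Pow {..<N}"
  proof
    fix x assume x: "x \<in> cube N"
    have "x = indicator {i. i < N \<and> x i = 1}"
      using x unfolding cube_def by (auto simp: fun_eq_iff indicator_def) (metis not_le)
    then show "x \<in> (\<lambda>S. indicator S) ` Pow {..<N}" by blast
  qed
  show "(\<lambda>S. indicator S) ` Pow {..<N} \<subseteq> cube N" by (auto simp: cube_def indicator_def)
qed

lemma finite_cube [simp]: "finite (cube N)"
  by (simp add: cube_eq_indicator_image)

lemma card_cube: "card (cube N) = 2 ^ N"
proof -
  have "inj_on (\<lambda>S. indicator S :: nat \<Rightarrow> real) (Pow {..<N})"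
    by (rule inj_onI) (metis indicator_eq_0_iff indicator_eq_1_iff subsetI subset_antisym zero_neq_one)
  then show ?thesis by (simp add: cube_eq_indicator_image card_image card_Pow)
qed

lemma cube_coord_01: "x \<in> cube N \<Longrightarrow> x i = 0 \<or> x i = 1"
  unfolding cube_def by (cases "i < N") auto

lemma flip_in_cube: "x \<in> cube N \<Longrightarrow> j < N \<Longrightarrow> flip j x \<in> cube N"
  unfolding cube_def flip_def by auto

lemma flip_flip [simp]: "flip j (flip j x) = x"
  unfolding flip_def by auto

lemma flip_same [simp]: "flip j x j = 1 - x j"
  unfolding flip_def by auto

lemma flip_other [simp]: "i \<noteq> j \<Longrightarrow> flip j x i = x i"
  unfolding flip_def by auto

lemma sum_cube_flip: "j < N \<Longrightarrow> (\<Sum>x\<in>cube N. h (flip j x)) = (\<Sum>x\<in>cube N. h x)"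
  by (rule sum.reindex_bij_witness[of _ "flip j" "flip j"]) (auto simp: flip_in_cube)

text \<open>On the cube \<open>parity S x = (-1)^(\<Sum>i\<in>S. x i)\<close>, the Fourier character of \<open>S\<close>.\<close>
definition parity :: "nat set \<Rightarrow> (nat \<Rightarrow> real) \<Rightarrow> real" where
  "parity S x = (\<Prod>i\<in>S. 1 - 2 * x i)"

lemma parity_empty [simp]: "parity {} x = 1"
  unfolding parity_def by simp

lemma parity_split: "finite S \<Longrightarrow> parity S x = parity (S \<inter> R) x * parity (S - R) x"
  unfolding parity_def by (metis Diff_Diff_Int Diff_subset prod.subset_diff)

lemma parity_flip:
  assumes "finite S" shows "parity S (flip j x) = (if j \<in> S then - parity S x else parity S x)"
proof -
  have split: "parity S y = parity (S \<inter> {j}) y * parity (S - {j}) y" for y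
    using parity_split[OF assms] .
  have "parity (S - {j}) (flip j x) = parity (S - {j}) x"
    unfolding parity_def by (rule prod.cong) auto
  moreover have "parity (S \<inter> {j}) (flip j x) = (if j \<in> S then - parity (S \<inter> {j}) x else 1)"
    by (cases "j \<in> S") (auto simp: parity_def Int_insert_right algebra_simps)
  moreover have "j \<notin> S \<Longrightarrow> parity (S \<inter> {j}) x = 1"
    by (simp add: Int_insert_right)
  ultimately show ?thesis
    unfolding split[of "flip j x"] split[of x] by auto
qed

lemma parity_square:
  assumes "x \<in> cube N" shows "parity S x * parity S x = 1"
  unfolding parity_def prod.distrib[symmetric]
proof (rule prod.neutral, intro ballI)
  fix i show "(1 - 2 * x i) * (1 - 2 * x i) = 1" using cube_coord_01[OF assms, of i] by auto
qed

lemma parity_mult: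
  assumes "x \<in> cube N" "finite S" "finite T"
  shows "parity S x * parity T x = parity (sym_diff S T) x"
proof -
  have "parity (sym_diff S T) x = parity (S - T) x * parity (T - S) x"
    unfolding parity_def using assms by (intro prod.union_disjoint) auto
  moreover have "parity T x = parity (T \<inter> S) x * parity (T - S) x"
    using parity_split assms(3) .
  moreover have "parity S x = parity (S \<inter> T) x * parity (S - T) x"
    using parity_split assms(2) .
  ultimately show ?thesis
    using parity_square[OF assms(1), of "S \<inter> T"] by (simp add: Int_commute algebra_simps)
qed

lemma sum_parity_eq_0:
  assumes "S \<subseteq> {..<N}" "S \<noteq> {}" shows "(\<Sum>x\<in>cube N. parity S x) = 0"
proof -
  obtain j where j: "j \<in> S" using assms by auto
  have "finite S" using assms(1) finite_subset by blast
  then have "(\<Sum>x\<in>cube N. parity S x) = - (\<Sum>x\<in>cube N. parity S x)"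
    using sum_cube_flip[of j N "parity S"] j assms(1) by (auto simp: parity_flip sum_negf)
  then show ?thesis by simp
qed

lemma parity_orthogonal:
  assumes "S \<subseteq> {..<N}" "T \<subseteq> {..<N}"
  shows "(\<Sum>x\<in>cube N. parity S x * parity T x) = (if S = T then 2 ^ N else 0)"
proof -
  have "finite S" "finite T" using assms finite_subset by blast+
  then have "(\<Sum>x\<in>cube N. parity S x * parity T x) = (\<Sum>x\<in>cube N. parity (sym_diff S T) x)"
    by (intro sum.cong) (auto simp: parity_mult)
  then show ?thesis
    using sum_parity_eq_0[of "sym_diff S T" N] assms by (auto simp: card_cube)
qed

definition fourier_sets :: "nat \<Rightarrow> nat \<Rightarrow> nat set set" where
  "fourier_sets N d = {S. S \<subseteq> {..<N} \<and> card S \<le> d}"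

lemma finite_fourier_sets [simp]: "finite (fourier_sets N d)"
  unfolding fourier_sets_def by (rule finite_subset[of _ "Pow {..<N}"]) auto

lemma finite_of_fourier_sets: "S \<in> fourier_sets N d \<Longrightarrow> finite S"
  unfolding fourier_sets_def using finite_subset by blast

definition fourier_degree_le :: "nat \<Rightarrow> nat \<Rightarrow> ((nat \<Rightarrow> real) \<Rightarrow> real) \<Rightarrow> bool" where
  "fourier_degree_le N d f \<longleftrightarrow>
     (\<exists>c. \<forall>x\<in>cube N. f x = (\<Sum>S\<in>fourier_sets N d. c S * parity S x))"

lemma fourier_degree_le_cong:
  "fourier_degree_le N d f \<Longrightarrow> (\<And>x. x \<in> cube N \<Longrightarrow> f x = g x) \<Longrightarrow> fourier_degree_le N d g"
  unfolding fourier_degree_le_def by metis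

lemma fourier_degree_le_parity:
  assumes "S \<subseteq> {..<N}" "card S \<le> d" shows "fourier_degree_le N d (\<lambda>x. a * parity S x)"
  unfolding fourier_degree_le_def
proof (intro exI ballI)
  fix x
  have "(\<Sum>T\<in>fourier_sets N d. (if T = S then a else 0) * parity T x)
      = (\<Sum>T\<in>fourier_sets N d. if T = S then a * parity S x else 0)"
    by (intro sum.cong) auto
  also have "\<dots> = a * parity S x" using assms by (simp add: fourier_sets_def)
  finally show "a * parity S x = (\<Sum>T\<in>fourier_sets N d. (if T = S then a else 0) * parity T x)"
    by simp
qed

lemma fourier_degree_le_const: "fourier_degree_le N d (\<lambda>x. a)"
  using fourier_degree_le_parity[of "{}" N d a] by simp

lemma fourier_degree_le_add:
  assumes "fourier_degree_le N d f" "fourier_degree_le N d g"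
  shows "fourier_degree_le N d (\<lambda>x. f x + g x)"
proof -
  obtain c e where "\<forall>x\<in>cube N. f x = (\<Sum>S\<in>fourier_sets N d. c S * parity S x)"
    and "\<forall>x\<in>cube N. g x = (\<Sum>S\<in>fourier_sets N d. e S * parity S x)"
    using assms unfolding fourier_degree_le_def by blast
  then show ?thesis unfolding fourier_degree_le_def
    by (intro exI[of _ "\<lambda>S. c S + e S"]) (simp add: distrib_right sum.distrib)
qed

lemma fourier_degree_le_sum:
  assumes "finite I" "\<And>i. i \<in> I \<Longrightarrow> fourier_degree_le N d (f i)"
  shows "fourier_degree_le N d (\<lambda>x. \<Sum>i\<in>I. f i x)"
  using assms
proof (induction I rule: finite_induct)
  case empty
  then show ?case using fourier_degree_le_const[of N d 0] by simp
next
  case (insert i I)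
  then show ?case by (simp add: fourier_degree_le_add)
qed

lemma fourier_degree_le_mono:
  assumes "fourier_degree_le N d f" "d \<le> d'" shows "fourier_degree_le N d' f"
proof -
  obtain c where c: "\<forall>x\<in>cube N. f x = (\<Sum>S\<in>fourier_sets N d. c S * parity S x)"
    using assms unfolding fourier_degree_le_def by blast
  have "fourier_degree_le N d' (\<lambda>x. \<Sum>S\<in>fourier_sets N d. c S * parity S x)"
    using assms(2) by (intro fourier_degree_le_sum fourier_degree_le_parity) (auto simp: fourier_sets_def)
  then show ?thesis by (rule fourier_degree_le_cong) (use c in auto)
qed

lemma fourier_degree_le_mult:
  assumes "fourier_degree_le N d1 f" "fourier_degree_le N d2 g"
  shows "fourier_degree_le N (d1 + d2) (\<lambda>x. f x * g x)"
proof -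
  obtain c e where c: "\<forall>x\<in>cube N. f x = (\<Sum>S\<in>fourier_sets N d1. c S * parity S x)"
    and e: "\<forall>x\<in>cube N. g x = (\<Sum>S\<in>fourier_sets N d2. e S * parity S x)"
    using assms unfolding fourier_degree_le_def by blast
  let ?h = "\<lambda>x. \<Sum>S\<in>fourier_sets N d1. \<Sum>T\<in>fourier_sets N d2. (c S * e T) * parity (sym_diff S T) x"
  have "fourier_degree_le N (d1 + d2) ?h"
  proof (intro fourier_degree_le_sum finite_fourier_sets fourier_degree_le_parity)
    fix S T assume S: "S \<in> fourier_sets N d1" and T: "T \<in> fourier_sets N d2"
    then show "sym_diff S T \<subseteq> {..<N}" by (auto simp: fourier_sets_def)
    have "card (sym_diff S T) \<le> card S + card T"
      using finite_of_fourier_sets[OF S] finite_of_fourier_sets[OF T]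
      by (meson add_mono card_Un_le card_mono Diff_subset order_trans)
    then show "card (sym_diff S T) \<le> d1 + d2" using S T by (auto simp: fourier_sets_def)
  qed
  moreover have "?h x = f x * g x" if x: "x \<in> cube N" for x
  proof -
    have "?h x = (\<Sum>S\<in>fourier_sets N d1. \<Sum>T\<in>fourier_sets N d2. (c S * parity S x) * (e T * parity T x))"
      using parity_mult[OF x] finite_of_fourier_sets by (intro sum.cong refl) (simp add: algebra_simps)
    also have "\<dots> = f x * g x" using c e x by (simp add: sum_product)
    finally show ?thesis .
  qed
  ultimately show ?thesis by (rule fourier_degree_le_cong)
qed

text \<open>\<open>\<lambda>x. f (fix_coords R z x)\<close> is the restriction of \<open>f\<close> to the subcube through \<open>z\<close> in which the
  coordinates in \<open>R\<close> are fixed, viewed again as a function on the whole cube.\<close>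
definition fix_coords :: "nat set \<Rightarrow> (nat \<Rightarrow> real) \<Rightarrow> (nat \<Rightarrow> real) \<Rightarrow> (nat \<Rightarrow> real)" where
  "fix_coords R z x = (\<lambda>i. if i \<in> R then z i else x i)"

lemma fix_coords_in_cube: "x \<in> cube N \<Longrightarrow> z \<in> cube N \<Longrightarrow> fix_coords R z x \<in> cube N"
  unfolding cube_def fix_coords_def by auto

lemma parity_fix_coords:
  assumes "finite S" shows "parity S (fix_coords R z x) = parity (S \<inter> R) z * parity (S - R) x"
proof -
  have "parity (S \<inter> R) (fix_coords R z x) = parity (S \<inter> R) z"
    and "parity (S - R) (fix_coords R z x) = parity (S - R) x"
    unfolding parity_def fix_coords_def by (auto intro!: prod.cong)
  then show ?thesis using parity_split[OF assms] by metis
qed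

lemma fourier_degree_le_fix_coords:
  assumes "fourier_degree_le N d f" "z \<in> cube N"
  shows "fourier_degree_le N d (\<lambda>x. f (fix_coords R z x))"
proof -
  obtain c where c: "\<forall>x\<in>cube N. f x = (\<Sum>S\<in>fourier_sets N d. c S * parity S x)"
    using assms unfolding fourier_degree_le_def by blast
  let ?h = "\<lambda>x. \<Sum>S\<in>fourier_sets N d. (c S * parity (S \<inter> R) z) * parity (S - R) x"
  have "fourier_degree_le N d ?h"
  proof (intro fourier_degree_le_sum finite_fourier_sets fourier_degree_le_parity)
    fix S assume S: "S \<in> fourier_sets N d"
    then show "S - R \<subseteq> {..<N}" by (auto simp: fourier_sets_def)
    show "card (S - R) \<le> d"
      using S card_mono[OF finite_of_fourier_sets[OF S], of "S - R"] by (auto simp: fourier_sets_def)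
  qed
  moreover have "?h x = f (fix_coords R z x)" if "x \<in> cube N" for x
    using c fix_coords_in_cube[OF that assms(2)]
    by (simp add: parity_fix_coords finite_of_fourier_sets mult.assoc)
  ultimately show ?thesis by (rule fourier_degree_le_cong)
qed

section \<open>Quantum query algorithms have low Fourier degree\<close>

lemma finite_qbasis [simp]: "finite (qbasis N M)"
  unfolding qbasis_def by simp

definition query_sign :: "nat \<Rightarrow> nat \<times> nat \<Rightarrow> (nat \<Rightarrow> real) \<Rightarrow> real" where
  "query_sign N b x = (if 1 \<le> fst b \<and> fst b \<le> N then parity {fst b - 1} x else 1)"

lemma query_op_on_cube:
  "x \<in> cube N \<Longrightarrow> query_op N x v b = complex_of_real (query_sign N b x) * v b"
  using cube_coord_01[of x N "fst b - 1"]
  by (cases b) (auto simp: query_op_def query_sign_def parity_def)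

lemma fourier_degree_le_query_sign: "fourier_degree_le N 1 (\<lambda>x. a * query_sign N b x)"
proof (cases "1 \<le> fst b \<and> fst b \<le> N")
  case True
  then have "fourier_degree_le N 1 (\<lambda>x. a * parity {fst b - 1} x)"
    by (intro fourier_degree_le_parity) auto
  then show ?thesis by (rule fourier_degree_le_cong) (use True in \<open>simp add: query_sign_def\<close>)
next
  case False
  then have "query_sign N b = (\<lambda>x. 1)" by (auto simp: query_sign_def)
  then show ?thesis using fourier_degree_le_const[of N 1 a] by simp
qed

text \<open>Each query multiplies the amplitudes by degree-1 signs, while the unitaries only mix them
  with constant coefficients.\<close>
lemma fourier_degree_le_amplitude:
  "fourier_degree_le N t (\<lambda>x. Re (qrun N M Us x t a)) \<and>
   fourier_degree_le N t (\<lambda>x. Im (qrun N M Us x t a))"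
proof (induction t arbitrary: a)
  case 0
  show ?case by (simp add: fourier_degree_le_const)
next
  case (Suc t)
  let ?B = "qbasis N M" and ?U = "Us (Suc t) a"
  have step: "fourier_degree_le N (Suc t) (\<lambda>x. r * query_sign N b x * g x)"
    if "fourier_degree_le N t g" for r b g
    using fourier_degree_le_mult[OF fourier_degree_le_query_sign that] by simp
  have "fourier_degree_le N (Suc t) (\<lambda>x. Re (qrun N M Us x (Suc t) a))"
  proof (rule fourier_degree_le_cong)
    show "fourier_degree_le N (Suc t) (\<lambda>x. \<Sum>b\<in>?B.
          Re (?U b) * query_sign N b x * Re (qrun N M Us x t b)
          + - Im (?U b) * query_sign N b x * Im (qrun N M Us x t b))"
      by (intro fourier_degree_le_sum finite_qbasis fourier_degree_le_add step; use Suc.IH in blast)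
  qed (simp add: apply_op_def query_op_on_cube algebra_simps)
  moreover have "fourier_degree_le N (Suc t) (\<lambda>x. Im (qrun N M Us x (Suc t) a))"
  proof (rule fourier_degree_le_cong)
    show "fourier_degree_le N (Suc t) (\<lambda>x. \<Sum>b\<in>?B.
          Re (?U b) * query_sign N b x * Im (qrun N M Us x t b)
          + Im (?U b) * query_sign N b x * Re (qrun N M Us x t b))"
      by (intro fourier_degree_le_sum finite_qbasis fourier_degree_le_add step; use Suc.IH in blast)
  qed (simp add: apply_op_def query_op_on_cube algebra_simps)
  ultimately show ?case ..
qed

lemma fourier_degree_le_acc_prob:
  assumes "Acc \<subseteq> qbasis N M" shows "fourier_degree_le N (2 * T) (acc_prob N M Us Acc T)"
proof -
  have "finite Acc" using finite_subset[OF assms] by simp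
  then have "fourier_degree_le N (T + T) (\<lambda>x. \<Sum>a\<in>Acc.
      Re (qrun N M Us x T a) * Re (qrun N M Us x T a) + Im (qrun N M Us x T a) * Im (qrun N M Us x T a))"
    using fourier_degree_le_amplitude
    by (intro fourier_degree_le_sum fourier_degree_le_add fourier_degree_le_mult) auto
  then show ?thesis
    unfolding mult_2
    by (rule fourier_degree_le_cong) (simp add: acc_prob_def cmod_power2 flip: power2_eq_square)
qed

definition sq_norm :: "(nat \<times> nat) set \<Rightarrow> qstate \<Rightarrow> real" where
  "sq_norm B v = (\<Sum>a\<in>B. (cmod (v a))\<^sup>2)"

lemma of_real_sq_norm: "complex_of_real (sq_norm B v) = (\<Sum>a\<in>B. v a * cnj (v a))"
  unfolding sq_norm_def of_real_sum by (intro sum.cong refl) (rule complex_norm_square)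

lemma sq_norm_apply_op:
  assumes "finite B" and U: "unitary_on B U"
  shows "sq_norm B (apply_op B U v) = sq_norm B v"
proof -
  have "complex_of_real (sq_norm B (apply_op B U v))
      = (\<Sum>a\<in>B. \<Sum>b\<in>B. \<Sum>c\<in>B. (v b * cnj (v c)) * (cnj (U a c) * U a b))"
    unfolding of_real_sq_norm apply_op_def cnj_sum complex_cnj_mult sum_product
    by (simp only: ac_simps)
  also have "\<dots> = (\<Sum>b\<in>B. \<Sum>a\<in>B. \<Sum>c\<in>B. (v b * cnj (v c)) * (cnj (U a c) * U a b))"
    by (rule sum.swap)
  also have "\<dots> = (\<Sum>b\<in>B. \<Sum>c\<in>B. \<Sum>a\<in>B. (v b * cnj (v c)) * (cnj (U a c) * U a b))"
    by (rule sum.cong[OF refl], rule sum.swap)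
  also have "\<dots> = (\<Sum>b\<in>B. \<Sum>c\<in>B. (v b * cnj (v c)) * (\<Sum>a\<in>B. cnj (U a c) * U a b))"
    by (simp only: sum_distrib_left)
  also have "\<dots> = (\<Sum>b\<in>B. \<Sum>c\<in>B. if c = b then v b * cnj (v c) else 0)"
    using U unfolding unitary_on_def by (intro sum.cong refl) auto
  also have "\<dots> = complex_of_real (sq_norm B v)"
    using assms(1) by (simp add: of_real_sq_norm)
  finally show ?thesis by (simp only: of_real_eq_iff)
qed

lemma sq_norm_query_op: "sq_norm B (query_op N x v) = sq_norm B v"
  unfolding sq_norm_def query_op_def by (intro sum.cong refl) (auto split: prod.splits)

lemma sq_norm_qrun:
  assumes "M \<ge> 1" "\<forall>t\<le>T. unitary_on (qbasis N M) (Us t)" "t \<le> T"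
  shows "sq_norm (qbasis N M) (qrun N M Us x t) = 1"
  using assms(3)
proof (induction t)
  case 0
  have "(0, 0) \<in> qbasis N M" using assms(1) by (simp add: qbasis_def)
  then have "sq_norm (qbasis N M) (\<lambda>a. if a = (0, 0) then 1 else 0) = 1"
    unfolding sq_norm_def by (simp add: if_distrib[of "\<lambda>v. (cmod v)\<^sup>2"] cong: if_cong)
  then show ?case using assms(2) by (simp add: sq_norm_apply_op)
next
  case (Suc t)
  then show ?case using assms(2) by (simp add: sq_norm_apply_op sq_norm_query_op)
qed

lemma acc_prob_bounded:
  assumes "M \<ge> 1" "\<forall>t\<le>T. unitary_on (qbasis N M) (Us t)" "Acc \<subseteq> qbasis N M"
  shows "0 \<le> acc_prob N M Us Acc T x \<and> acc_prob N M Us Acc T x \<le> 1"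
proof
  show "0 \<le> acc_prob N M Us Acc T x" unfolding acc_prob_def by (simp add: sum_nonneg)
  have "acc_prob N M Us Acc T x \<le> sq_norm (qbasis N M) (qrun N M Us x T)"
    unfolding acc_prob_def sq_norm_def by (rule sum_mono2) (use assms(3) in auto)
  then show "acc_prob N M Us Acc T x \<le> 1" using sq_norm_qrun[OF assms(1,2) order_refl] by simp
qed

lemma is_poly_zero: "is_poly N d (\<lambda>x. 0)"
  unfolding is_poly_def by (rule exI[of _ "{}"]) simp

lemma is_poly_add:
  assumes "is_poly N d p" "is_poly N d q" shows "is_poly N d (\<lambda>x. p x + q x)"
proof -
  obtain A c where A: "finite A" "\<forall>\<alpha>\<in>A. (\<forall>i\<ge>N. \<alpha> i = 0) \<and> (\<Sum>i<N. \<alpha> i) \<le> d"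
    "\<forall>x. p x = (\<Sum>\<alpha>\<in>A. c \<alpha> * (\<Prod>i<N. x i ^ \<alpha> i))"
    using assms(1) unfolding is_poly_def by blast
  obtain B e where B: "finite B" "\<forall>\<alpha>\<in>B. (\<forall>i\<ge>N. \<alpha> i = 0) \<and> (\<Sum>i<N. \<alpha> i) \<le> d"
    "\<forall>x. q x = (\<Sum>\<alpha>\<in>B. e \<alpha> * (\<Prod>i<N. x i ^ \<alpha> i))"
    using assms(2) unfolding is_poly_def by blast
  define c' where "c' \<alpha> = (if \<alpha> \<in> A then c \<alpha> else 0) + (if \<alpha> \<in> B then e \<alpha> else 0)" for \<alpha>
  have "p x + q x = (\<Sum>\<alpha>\<in>A \<union> B. c' \<alpha> * (\<Prod>i<N. x i ^ \<alpha> i))" for x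
  proof -
    let ?m = "\<lambda>\<alpha>. \<Prod>i<N. x i ^ \<alpha> i"
    have "(\<Sum>\<alpha>\<in>A \<union> B. c' \<alpha> * ?m \<alpha>)
        = (\<Sum>\<alpha>\<in>A \<union> B. if \<alpha> \<in> A then c \<alpha> * ?m \<alpha> else 0)
          + (\<Sum>\<alpha>\<in>A \<union> B. if \<alpha> \<in> B then e \<alpha> * ?m \<alpha> else 0)"
      unfolding sum.distrib[symmetric] c'_def by (intro sum.cong refl) (auto simp: distrib_right)
    also have "\<dots> = (\<Sum>\<alpha>\<in>A. c \<alpha> * ?m \<alpha>) + (\<Sum>\<alpha>\<in>B. e \<alpha> * ?m \<alpha>)"
      using A(1) B(1) by (simp add: sum.If_cases Int_absorb1 Int_absorb2)
    finally show ?thesis using A(3) B(3) by simp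
  qed
  then show ?thesis unfolding is_poly_def using A B
    by (intro exI[of _ "A \<union> B"] exI[of _ c']) auto
qed

lemma is_poly_scale: assumes "is_poly N d p" shows "is_poly N d (\<lambda>x. a * p x)"
proof -
  obtain A c where "finite A" "\<forall>\<alpha>\<in>A. (\<forall>i\<ge>N. \<alpha> i = 0) \<and> (\<Sum>i<N. \<alpha> i) \<le> d"
    "\<forall>x. p x = (\<Sum>\<alpha>\<in>A. c \<alpha> * (\<Prod>i<N. x i ^ \<alpha> i))"
    using assms unfolding is_poly_def by blast
  then show ?thesis unfolding is_poly_def
    by (intro exI[of _ A] exI[of _ "\<lambda>\<alpha>. a * c \<alpha>"]) (simp add: sum_distrib_left mult.assoc)
qed

lemma is_poly_sum:
  assumes "finite I" "\<And>i. i \<in> I \<Longrightarrow> is_poly N d (p i)"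
  shows "is_poly N d (\<lambda>x. \<Sum>i\<in>I. p i x)"
  using assms by (induction I rule: finite_induct) (simp_all add: is_poly_zero is_poly_add)

lemma is_poly_multilinear_monomial:
  assumes "T \<subseteq> {..<N}" "card T \<le> d" shows "is_poly N d (\<lambda>x. \<Prod>i\<in>T. x i)"
proof -
  define \<alpha> where "\<alpha> i = (if i \<in> T then 1 else 0::nat)" for i
  have T: "{..<N} \<inter> T = T" using assms(1) by auto
  have "(\<Prod>i<N. x i ^ \<alpha> i) = (\<Prod>i\<in>T. x i)" for x :: "nat \<Rightarrow> real"
    unfolding \<alpha>_def by (simp add: if_distrib[of "\<lambda>k. _ ^ k"] prod.inter_restrict[symmetric] T
        cong: if_cong)
  moreover have "(\<Sum>i<N. \<alpha> i) = card T"
    unfolding \<alpha>_def using sum.inter_restrict[of "{..<N}" "\<lambda>_. 1::nat" T] by (simp add: T)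
  moreover have "\<forall>i\<ge>N. \<alpha> i = 0" using assms(1) unfolding \<alpha>_def by auto
  ultimately show ?thesis unfolding is_poly_def using assms(2)
    by (intro exI[of _ "{\<alpha>}"] exI[of _ "\<lambda>_. 1"]) auto
qed

lemma is_poly_parity:
  assumes "S \<subseteq> {..<N}" "card S \<le> d" shows "is_poly N d (parity S)"
proof -
  have S: "finite S" using assms(1) finite_subset by blast
  have "parity S x = (\<Sum>T\<in>Pow S. (-2) ^ card T * (\<Prod>i\<in>T. x i))" for x
  proof -
    have "parity S x = (\<Prod>i\<in>S. (-2) * x i + 1)" unfolding parity_def by (intro prod.cong) auto
    also have "\<dots> = (\<Sum>T\<in>Pow S. (\<Prod>i\<in>T. (-2) * x i) * (\<Prod>i\<in>S - T. 1))"
      by (rule prod_add[OF S])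
    also have "\<dots> = (\<Sum>T\<in>Pow S. (-2) ^ card T * (\<Prod>i\<in>T. x i))"
      by (intro sum.cong refl) (simp only: prod.distrib prod_constant power_one mult_1_right)
    finally show ?thesis .
  qed
  moreover have "is_poly N d (\<lambda>x. \<Sum>T\<in>Pow S. (-2) ^ card T * (\<Prod>i\<in>T. x i))"
  proof (intro is_poly_sum is_poly_scale is_poly_multilinear_monomial)
    fix T assume "T \<in> Pow S"
    then show "T \<subseteq> {..<N}" "card T \<le> d" using assms card_mono[OF S, of T] by auto
  qed (use S in simp)
  ultimately show ?thesis by (metis (no_types, lifting) ext)
qed

lemma fourier_degree_le_imp_is_poly:
  assumes "fourier_degree_le N d f" shows "\<exists>p. is_poly N d p \<and> (\<forall>x\<in>cube N. p x = f x)"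
proof -
  obtain c where c: "\<forall>x\<in>cube N. f x = (\<Sum>S\<in>fourier_sets N d. c S * parity S x)"
    using assms unfolding fourier_degree_le_def by blast
  have "is_poly N d (\<lambda>x. \<Sum>S\<in>fourier_sets N d. c S * parity S x)"
    by (intro is_poly_sum finite_fourier_sets is_poly_scale is_poly_parity)
      (auto simp: fourier_sets_def)
  then show ?thesis using c by auto
qed

section \<open>Total influence\<close>

lemma parseval:
  "(\<Sum>x\<in>cube N. (\<Sum>S\<in>fourier_sets N d. a S * parity S x)\<^sup>2)
     = 2 ^ N * (\<Sum>S\<in>fourier_sets N d. (a S)\<^sup>2)"
proof -
  let ?F = "fourier_sets N d"
  have "(\<Sum>x\<in>cube N. (\<Sum>S\<in>?F. a S * parity S x)\<^sup>2)
      = (\<Sum>x\<in>cube N. \<Sum>S\<in>?F. \<Sum>T\<in>?F. (a S * a T) * (parity S x * parity T x))"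
    by (simp only: power2_eq_square sum_product ac_simps)
  also have "\<dots> = (\<Sum>S\<in>?F. \<Sum>T\<in>?F. (a S * a T) * (\<Sum>x\<in>cube N. parity S x * parity T x))"
    by (subst sum.swap, rule sum.cong[OF refl], subst sum.swap) (simp only: sum_distrib_left)
  also have "\<dots> = (\<Sum>S\<in>?F. \<Sum>T\<in>?F. if S = T then (a S * a T) * 2 ^ N else 0)"
    by (intro sum.cong refl) (auto simp: parity_orthogonal fourier_sets_def)
  also have "\<dots> = 2 ^ N * (\<Sum>S\<in>?F. (a S)\<^sup>2)"
    by (simp add: sum_distrib_left power2_eq_square mult.commute)
  finally show ?thesis .
qed

lemma flip_difference_expansion:
  assumes c: "\<forall>x\<in>cube N. f x = (\<Sum>S\<in>fourier_sets N d. c S * parity S x)"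
    and "x \<in> cube N" "k < N"
  shows "f x - f (flip k x) = (\<Sum>S\<in>fourier_sets N d. (2 * (if k \<in> S then c S else 0)) * parity S x)"
proof -
  have "f x - f (flip k x)
      = (\<Sum>S\<in>fourier_sets N d. c S * parity S x - c S * parity S (flip k x))"
    using c assms(2) flip_in_cube[OF assms(2,3)] by (simp add: sum_subtractf)
  also have "\<dots> = (\<Sum>S\<in>fourier_sets N d. (2 * (if k \<in> S then c S else 0)) * parity S x)"
    by (intro sum.cong refl) (auto simp: parity_flip finite_of_fourier_sets)
  finally show ?thesis .
qed

lemma sum_coords_fourier_weights:
  "(\<Sum>k<N. \<Sum>S\<in>fourier_sets N d. (2 * (if k \<in> S then c S else 0))\<^sup>2)
     = 4 * (\<Sum>S\<in>fourier_sets N d. real (card S) * (c S)\<^sup>2)"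
proof -
  have *: "(\<Sum>k<N. if k \<in> S then (c S)\<^sup>2 else 0) = real (card S) * (c S)\<^sup>2"
    if "S \<in> fourier_sets N d" for S
  proof -
    have "{..<N} \<inter> S = S" using that by (auto simp: fourier_sets_def)
    then show ?thesis by (simp add: sum.If_cases)
  qed
  have "(\<Sum>k<N. \<Sum>S\<in>fourier_sets N d. (2 * (if k \<in> S then c S else 0))\<^sup>2)
      = 4 * (\<Sum>k<N. \<Sum>S\<in>fourier_sets N d. if k \<in> S then (c S)\<^sup>2 else 0)"
    unfolding sum_distrib_left by (intro sum.cong refl) simp
  also have "\<dots> = 4 * (\<Sum>S\<in>fourier_sets N d. \<Sum>k<N. if k \<in> S then (c S)\<^sup>2 else 0)"
    by (subst sum.swap) (rule refl)
  finally show ?thesis using * by simp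
qed

lemma total_sq_influence_le:
  assumes "fourier_degree_le N d f" "\<forall>x\<in>cube N. \<bar>f x\<bar> \<le> 1"
  shows "(\<Sum>k<N. \<Sum>x\<in>cube N. (f x - f (flip k x))\<^sup>2) \<le> 4 * real d * 2 ^ N"
proof -
  obtain c where c: "\<forall>x\<in>cube N. f x = (\<Sum>S\<in>fourier_sets N d. c S * parity S x)"
    using assms unfolding fourier_degree_le_def by blast
  have "(\<Sum>k<N. \<Sum>x\<in>cube N. (f x - f (flip k x))\<^sup>2)
      = (\<Sum>k<N. 2 ^ N * (\<Sum>S\<in>fourier_sets N d. (2 * (if k \<in> S then c S else 0))\<^sup>2))"
    by (intro sum.cong refl) (simp add: flip_difference_expansion[OF c] parseval)
  also have "\<dots> = 2 ^ N * (\<Sum>k<N. \<Sum>S\<in>fourier_sets N d. (2 * (if k \<in> S then c S else 0))\<^sup>2)"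
    by (simp only: sum_distrib_left)
  also have "\<dots> = 4 * 2 ^ N * (\<Sum>S\<in>fourier_sets N d. real (card S) * (c S)\<^sup>2)"
    unfolding sum_coords_fourier_weights by simp
  also have "\<dots> \<le> 4 * 2 ^ N * (\<Sum>S\<in>fourier_sets N d. real d * (c S)\<^sup>2)"
    by (intro mult_left_mono sum_mono mult_right_mono) (auto simp: fourier_sets_def)
  also have "\<dots> = 4 * real d * (\<Sum>x\<in>cube N. (f x)\<^sup>2)"
    using parseval[where a = c] c by (simp add: sum_distrib_left[symmetric])
  also have "\<dots> \<le> 4 * real d * (\<Sum>x\<in>cube N. 1)"
    using assms(2) by (intro mult_left_mono sum_mono) (auto simp: abs_square_le_1)
  finally show ?thesis by (simp add: card_cube)
qed

definition subcube :: "nat \<Rightarrow> nat set \<Rightarrow> (nat \<Rightarrow> real) \<Rightarrow> (nat \<Rightarrow> real) set" where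
  "subcube N R z = {x \<in> cube N. \<forall>i\<in>R. x i = z i}"

lemma finite_subcube [simp]: "finite (subcube N R z)"
  unfolding subcube_def by simp

lemma subcube_subset_cube: "subcube N R z \<subseteq> cube N"
  unfolding subcube_def by auto

lemma mem_subcube_self: "z \<in> cube N \<Longrightarrow> z \<in> subcube N R z"
  unfolding subcube_def by auto

lemma subcube_empty [simp]: "subcube N {} z = cube N"
  unfolding subcube_def by simp

lemma subcube_insert:
  "j \<notin> R \<Longrightarrow> subcube N (insert j R) (z(j := b)) = {x \<in> subcube N R z. x j = b}"
  unfolding subcube_def by auto

lemma subcube_split:
  assumes "j \<notin> R"
  shows "subcube N R z = subcube N (insert j R) (z(j := 0)) \<union> subcube N (insert j R) (z(j := 1))"
    and "subcube N (insert j R) (z(j := 0)) \<inter> subcube N (insert j R) (z(j := 1)) = {}"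
  using cube_coord_01 unfolding subcube_insert[OF assms] by (auto simp: subcube_def)

lemma sum_cube_fun_upd:
  fixes g :: "(nat \<Rightarrow> real) \<Rightarrow> real"
  assumes "j < N" "b = 0 \<or> b = 1"
  shows "(\<Sum>x\<in>cube N. g (x(j := b))) = 2 * (\<Sum>x\<in>{x\<in>cube N. x j = b}. g x)"
proof -
  let ?C = "{x\<in>cube N. x j = b}" and ?D = "{x\<in>cube N. x j = 1 - b}"
  have split: "cube N = ?C \<union> ?D" using cube_coord_01 assms(2) by fastforce
  have "(\<Sum>x\<in>cube N. g (x(j := b))) = (\<Sum>x\<in>?C. g (x(j := b))) + (\<Sum>x\<in>?D. g (x(j := b)))"
    by (subst split, rule sum.union_disjoint) (use assms(2) in auto)
  also have "(\<Sum>x\<in>?C. g (x(j := b))) = (\<Sum>x\<in>?C. g x)"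
    by (intro sum.cong refl) (auto simp: fun_upd_idem)
  also have "(\<Sum>x\<in>?D. g (x(j := b))) = (\<Sum>x\<in>?D. g (flip j x))"
    by (intro sum.cong refl) (auto simp: flip_def)
  also have "\<dots> = (\<Sum>x\<in>?C. g x)"
    by (rule sum.reindex_bij_witness[of _ "flip j" "flip j"]) (auto simp: flip_in_cube assms(1))
  finally show ?thesis by (simp only: mult_2)
qed

lemma fix_coords_empty [simp]: "fix_coords {} z x = x"
  unfolding fix_coords_def by simp

lemma fix_coords_insert: "fix_coords (insert j R) z x = fix_coords R z (x(j := z j))"
  unfolding fix_coords_def by (auto simp: fun_eq_iff)

lemma fix_coords_flip_free: "k \<notin> R \<Longrightarrow> fix_coords R z (flip k x) = flip k (fix_coords R z x)"
  unfolding fix_coords_def flip_def by (auto simp: fun_eq_iff)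

lemma fix_coords_flip_fixed: "k \<in> R \<Longrightarrow> fix_coords R z (flip k x) = fix_coords R z x"
  unfolding fix_coords_def flip_def by (auto simp: fun_eq_iff)

text \<open>Every point of the subcube is hit by \<open>2 ^ card R\<close> inputs.\<close>
lemma sum_cube_fix_coords:
  fixes h :: "(nat \<Rightarrow> real) \<Rightarrow> real"
  assumes "R \<subseteq> {..<N}" "z \<in> cube N"
  shows "(\<Sum>x\<in>cube N. h (fix_coords R z x)) = 2 ^ card R * (\<Sum>y\<in>subcube N R z. h y)"
proof -
  have "finite R" using assms(1) finite_subset by blast
  then show ?thesis using assms(1)
  proof (induction R arbitrary: h rule: finite_induct)
    case empty
    then show ?case by simp
  next
    case (insert j R)
    let ?h = "\<lambda>y. if y j = z j then h y else 0"
    have "(\<Sum>x\<in>cube N. h (fix_coords (insert j R) z x))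
        = 2 * (\<Sum>x\<in>{x\<in>cube N. x j = z j}. h (fix_coords R z x))"
      unfolding fix_coords_insert
      using insert.prems cube_coord_01[OF assms(2)] by (intro sum_cube_fun_upd) auto
    also have "(\<Sum>x\<in>{x\<in>cube N. x j = z j}. h (fix_coords R z x)) = (\<Sum>x\<in>cube N. ?h (fix_coords R z x))"
      using insert(2) by (simp add: sum.inter_filter[symmetric] fix_coords_def)
    also have "\<dots> = 2 ^ card R * (\<Sum>y\<in>{y\<in>subcube N R z. y j = z j}. h y)"
      using insert by (simp add: sum.inter_filter)
    also have "{y\<in>subcube N R z. y j = z j} = subcube N (insert j R) z"
      unfolding subcube_def by auto
    finally show ?case using insert(1,2) by simp
  qed
qed

lemma card_subcube:
  assumes "R \<subseteq> {..<N}" "z \<in> cube N"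
  shows "2 ^ N = 2 ^ card R * real (card (subcube N R z))"
  using sum_cube_fix_coords[OF assms, of "\<lambda>_. 1"] by (simp add: card_cube)

lemma card_subcube_pos: "z \<in> cube N \<Longrightarrow> card (subcube N R z) > 0"
  using mem_subcube_self by (auto simp: card_gt_0_iff)

definition subcube_var :: "nat \<Rightarrow> ((nat \<Rightarrow> real) \<Rightarrow> real) \<Rightarrow> nat set \<Rightarrow> (nat \<Rightarrow> real) \<Rightarrow> real" where
  "subcube_var N f R z =
     (\<Sum>x\<in>subcube N R z. \<Sum>y\<in>subcube N R z. \<bar>f x - f y\<bar>) / (real (card (subcube N R z)))\<^sup>2"

lemma Vr_fix_coords:
  assumes "R \<subseteq> {..<N}" "z \<in> cube N"
  shows "Vr N (\<lambda>x. f (fix_coords R z x)) = subcube_var N f R z"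
proof -
  let ?Q = "subcube N R z"
  have "(\<Sum>x\<in>cube N. \<Sum>y\<in>cube N. \<bar>f (fix_coords R z x) - f (fix_coords R z y)\<bar>)
      = (\<Sum>x\<in>cube N. 2 ^ card R * (\<Sum>y\<in>?Q. \<bar>f (fix_coords R z x) - f y\<bar>))"
    by (intro sum.cong refl sum_cube_fix_coords[OF assms])
  also have "\<dots> = 2 ^ card R * (\<Sum>x\<in>cube N. \<Sum>y\<in>?Q. \<bar>f (fix_coords R z x) - f y\<bar>)"
    by (simp only: sum_distrib_left)
  also have "\<dots> = 2 ^ card R * 2 ^ card R * (\<Sum>x\<in>?Q. \<Sum>y\<in>?Q. \<bar>f x - f y\<bar>)"
    by (simp add: sum_cube_fix_coords[OF assms, of "\<lambda>u. \<Sum>y\<in>?Q. \<bar>f u - f y\<bar>"])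
  finally show ?thesis
    unfolding Vr_def subcube_var_def card_subcube[OF assms] by (simp add: power2_eq_square)
qed

lemma Inf_fix_coords_free:
  assumes "R \<subseteq> {..<N}" "z \<in> cube N" "k \<notin> R"
  shows "Defs.Inf N k (\<lambda>x. f (fix_coords R z x))
           = (\<Sum>y\<in>subcube N R z. \<bar>f y - f (flip k y)\<bar>) / real (card (subcube N R z))"
  unfolding Defs.Inf_def fix_coords_flip_free[OF assms(3)] card_subcube[OF assms(1,2)]
  by (simp add: sum_cube_fix_coords[OF assms(1,2), of "\<lambda>y. \<bar>f y - f (flip k y)\<bar>"])

lemma Inf_fix_coords_fixed: "k \<in> R \<Longrightarrow> Defs.Inf N k (\<lambda>x. f (fix_coords R z x)) = 0"
  unfolding Defs.Inf_def by (simp add: fix_coords_flip_fixed)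

definition energy :: "nat \<Rightarrow> ((nat \<Rightarrow> real) \<Rightarrow> real) \<Rightarrow> nat set \<Rightarrow> (nat \<Rightarrow> real) \<Rightarrow> real" where
  "energy N f R z = (\<Sum>k\<in>{..<N} - R. \<Sum>x\<in>subcube N R z. (f x - f (flip k x))\<^sup>2)"

lemma energy_nonneg: "0 \<le> energy N f R z"
  unfolding energy_def by (intro sum_nonneg) auto

lemma energy_split:
  assumes "j < N" "j \<notin> R"
  shows "energy N f R z = energy N f (insert j R) (z(j := 0)) + energy N f (insert j R) (z(j := 1))
           + (\<Sum>x\<in>subcube N R z. (f x - f (flip j x))\<^sup>2)"
proof -
  let ?H = "\<lambda>k x. (f x - f (flip k x))\<^sup>2"
  let ?Qlo = "subcube N (insert j R) (z(j := 0))" and ?Qhi = "subcube N (insert j R) (z(j := 1))"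
  have halves: "(\<Sum>x\<in>subcube N R z. ?H k x) = (\<Sum>x\<in>?Qlo. ?H k x) + (\<Sum>x\<in>?Qhi. ?H k x)" for k
    unfolding subcube_split(1)[OF assms(2)] by (rule sum.union_disjoint) (auto simp: subcube_split(2)[OF assms(2)])
  have "energy N f R z = (\<Sum>x\<in>subcube N R z. ?H j x) + (\<Sum>k\<in>{..<N} - R - {j}. \<Sum>x\<in>subcube N R z. ?H k x)"
    unfolding energy_def by (rule sum.remove) (use assms in auto)
  also have "{..<N} - R - {j} = {..<N} - insert j R" by auto
  finally show ?thesis
    unfolding halves sum.distrib energy_def by simp
qed

lemma markov_count:
  assumes "finite A" "\<And>x. x \<in> A \<Longrightarrow> 0 \<le> a x"
  shows "e * real (card {x\<in>A. e < a x}) \<le> sum a A"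
proof -
  have "e * real (card {x\<in>A. e < a x}) \<le> (\<Sum>x\<in>{x\<in>A. e < a x}. a x)"
    using sum_mono[of "{x\<in>A. e < a x}" "\<lambda>_. e" a] by (simp add: mult.commute)
  also have "\<dots> \<le> sum a A" by (rule sum_mono2) (use assms in auto)
  finally show ?thesis .
qed

lemma mean_approximates_on_subcube:
  assumes "z \<in> cube N" "subcube_var N f R z \<le> e1"
  defines "Q \<equiv> subcube N R z"
  shows "e * real (card {x \<in> Q. e < \<bar>(\<Sum>y\<in>Q. f y) / real (card Q) - f x\<bar>}) \<le> e1 * real (card Q)"
proof -
  let ?q = "real (card Q)" and ?m = "(\<Sum>y\<in>Q. f y) / real (card Q)"
  have q: "?q > 0" unfolding Q_def using card_subcube_pos[OF assms(1)] by simp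
  have dev: "\<bar>?m - f x\<bar> \<le> (\<Sum>y\<in>Q. \<bar>f x - f y\<bar>) / ?q" for x
  proof -
    have "?m - f x = (\<Sum>y\<in>Q. f y - f x) / ?q"
      using q by (simp add: sum_subtractf field_simps)
    then have "\<bar>?m - f x\<bar> = \<bar>\<Sum>y\<in>Q. f y - f x\<bar> / ?q" using q by simp
    also have "\<dots> \<le> (\<Sum>y\<in>Q. \<bar>f x - f y\<bar>) / ?q"
      using q sum_abs[of "\<lambda>y. f y - f x" Q] by (intro divide_right_mono) (auto simp: abs_minus_commute)
    finally show ?thesis .
  qed
  have "e * real (card {x \<in> Q. e < \<bar>?m - f x\<bar>}) \<le> (\<Sum>x\<in>Q. \<bar>?m - f x\<bar>)"
    by (rule markov_count) (auto simp: Q_def)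
  also have "\<dots> \<le> (\<Sum>x\<in>Q. (\<Sum>y\<in>Q. \<bar>f x - f y\<bar>) / ?q)"
    by (rule sum_mono) (rule dev)
  also have "\<dots> = subcube_var N f R z * ?q"
    unfolding subcube_var_def Q_def[symmetric] using q
    by (simp add: sum_divide_distrib[symmetric] power2_eq_square)
  also have "\<dots> \<le> e1 * ?q" using assms(2) q by (intro mult_right_mono) auto
  finally show ?thesis .
qed

lemma sq_bound_of_abs_sum_bound:
  assumes "finite A" "A \<noteq> {}" "0 \<le> t" "t * real (card A) \<le> (\<Sum>y\<in>A. \<bar>D y\<bar>)"
  shows "t\<^sup>2 * real (card A) \<le> (\<Sum>y\<in>A. (D y)\<^sup>2)"
proof -
  have c: "real (card A) > 0" using assms by auto
  have "(t * real (card A))\<^sup>2 \<le> (\<Sum>y\<in>A. \<bar>D y\<bar>)\<^sup>2"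
    using assms(3,4) c by (intro power_mono) auto
  also have "\<dots> \<le> (\<Sum>y\<in>A. (D y)\<^sup>2) * real (card A)"
    using sum_squared_le_sum_of_squares[of "\<lambda>y. \<bar>D y\<bar>" A] by simp
  finally show ?thesis using c by (simp add: power2_eq_square)
qed

section \<open>Building the decision tree\<close>

locale influential_subcubes =
  fixes N :: nat and f :: "(nat \<Rightarrow> real) \<Rightarrow> real" and tau e e1 :: real
  assumes tau_pos: "0 < tau" and e_pos: "0 < e" and e1_nonneg: "0 \<le> e1"
    and influential: "\<And>R z. R \<subseteq> {..<N} \<Longrightarrow> z \<in> cube N \<Longrightarrow> e1 \<le> subcube_var N f R z \<Longrightarrow>
          \<exists>k<N. k \<notin> R \<and> tau * real (card (subcube N R z)) \<le> (\<Sum>y\<in>subcube N R z. \<bar>f y - f (flip k y)\<bar>)"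
begin

definition misses :: "dtree \<Rightarrow> (nat \<Rightarrow> real) set \<Rightarrow> (nat \<Rightarrow> real) set" where
  "misses tr A = {x \<in> A. e < \<bar>dt_eval tr x - f x\<bar>}"

text \<open>The exceptional set \<open>U\<close> collects the subcubes on which the depth budget ran out while the
  variance was still large; its size is paid for by the energy.\<close>
definition approximates_on :: "nat \<Rightarrow> nat set \<Rightarrow> (nat \<Rightarrow> real) \<Rightarrow> dtree \<Rightarrow> (nat \<Rightarrow> real) set \<Rightarrow> bool" where
  "approximates_on n R z tr U \<longleftrightarrow> dt_depth tr \<le> n \<and> U \<subseteq> subcube N R z \<and>
     tau\<^sup>2 * real n * real (card U) \<le> energy N f R z \<and>
     e * real (card (misses tr (subcube N R z - U))) \<le> e1 * real (card (subcube N R z))"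

lemma finite_misses: "finite A \<Longrightarrow> finite (misses tr A)"
  unfolding misses_def by simp

lemma approximates_on_mean_Leaf:
  assumes "z \<in> cube N" "subcube_var N f R z < e1"
  shows "approximates_on n R z (Leaf ((\<Sum>y\<in>subcube N R z. f y) / real (card (subcube N R z)))) {}"
  using mean_approximates_on_subcube[of z N f R e1 e] assms energy_nonneg
  unfolding approximates_on_def misses_def by auto

lemma approximates_on_0: "approximates_on 0 R z (Leaf 0) (subcube N R z)"
  using energy_nonneg e1_nonneg unfolding approximates_on_def misses_def by auto

lemma misses_Query:
  assumes "k \<notin> R"
  shows "misses (Query k tr0 tr1) (subcube N R z - (U0 \<union> U1))
      \<subseteq> misses tr0 (subcube N (insert k R) (z(k := 0)) - U0)
        \<union> misses tr1 (subcube N (insert k R) (z(k := 1)) - U1)"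
proof
  fix x assume x: "x \<in> misses (Query k tr0 tr1) (subcube N R z - (U0 \<union> U1))"
  then have "x k = 0 \<or> x k = 1"
    using cube_coord_01 subcube_subset_cube unfolding misses_def by blast
  then show "x \<in> misses tr0 (subcube N (insert k R) (z(k := 0)) - U0)
      \<union> misses tr1 (subcube N (insert k R) (z(k := 1)) - U1)"
    using x unfolding misses_def subcube_insert[OF assms] by auto
qed

lemma approximates_on_Query:
  assumes R: "R \<subseteq> {..<N}" and z: "z \<in> cube N" and k: "k < N" "k \<notin> R"
    and infl: "tau * real (card (subcube N R z)) \<le> (\<Sum>y\<in>subcube N R z. \<bar>f y - f (flip k y)\<bar>)"
    and tr0: "approximates_on n (insert k R) (z(k := 0)) tr0 U0"
    and tr1: "approximates_on n (insert k R) (z(k := 1)) tr1 U1"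
  shows "approximates_on (Suc n) R z (Query k tr0 tr1) (U0 \<union> U1)"
proof -
  let ?Q = "subcube N R z"
    and ?Qlo = "subcube N (insert k R) (z(k := 0))" and ?Qhi = "subcube N (insert k R) (z(k := 1))"
  note Q = subcube_split[OF k(2), of N z]
  have U: "U0 \<subseteq> ?Qlo" "U1 \<subseteq> ?Qhi" using tr0 tr1 unfolding approximates_on_def by simp_all
  then have finU: "finite U0" "finite U1" by (simp_all add: finite_subset)
  have UQ: "U0 \<union> U1 \<subseteq> ?Q" using U Q(1) by blast
  have cardU: "card (U0 \<union> U1) = card U0 + card U1"
    using U Q(2) finU by (intro card_Un_disjoint) auto
  have "tau\<^sup>2 * real (card ?Q) \<le> (\<Sum>y\<in>?Q. (f y - f (flip k y))\<^sup>2)"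
    using sq_bound_of_abs_sum_bound[OF finite_subcube _ _ infl] mem_subcube_self[OF z] tau_pos by auto
  moreover have "tau\<^sup>2 * real (card (U0 \<union> U1)) \<le> tau\<^sup>2 * real (card ?Q)"
    using card_mono[OF finite_subcube UQ] by (intro mult_left_mono) auto
  ultimately have energy: "tau\<^sup>2 * real (Suc n) * real (card (U0 \<union> U1)) \<le> energy N f R z"
    using tr0 tr1 energy_split[OF k, of f z] unfolding approximates_on_def cardU
    by (simp add: algebra_simps)
  have "card (misses (Query k tr0 tr1) (?Q - (U0 \<union> U1)))
      \<le> card (misses tr0 (?Qlo - U0)) + card (misses tr1 (?Qhi - U1))"
    by (rule order_trans[OF card_mono[OF _ misses_Query[OF k(2)]] card_Un_le])
      (simp add: finite_misses)
  then have "e * real (card (misses (Query k tr0 tr1) (?Q - (U0 \<union> U1))))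
      \<le> e * real (card (misses tr0 (?Qlo - U0))) + e * real (card (misses tr1 (?Qhi - U1)))"
    using e_pos by (simp flip: distrib_left)
  also have "\<dots> \<le> e1 * real (card ?Qlo) + e1 * real (card ?Qhi)"
    using tr0 tr1 unfolding approximates_on_def by linarith
  also have "\<dots> = e1 * real (card ?Q)"
    using Q by (simp add: card_Un_disjoint distrib_left)
  finally show ?thesis
    using tr0 tr1 UQ energy unfolding approximates_on_def by auto
qed

lemma approximating_tree_exists:
  "R \<subseteq> {..<N} \<Longrightarrow> z \<in> cube N \<Longrightarrow> \<exists>tr U. approximates_on n R z tr U"
proof (induction n arbitrary: R z)
  case 0
  then show ?case using approximates_on_0 by blast
next
  case (Suc n)
  show ?case
  proof (cases "subcube_var N f R z < e1")
    case True
    then show ?thesis using approximates_on_mean_Leaf[OF Suc.prems(2)] by blast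
  next
    case False
    then obtain k where k: "k < N" "k \<notin> R"
      and infl: "tau * real (card (subcube N R z)) \<le> (\<Sum>y\<in>subcube N R z. \<bar>f y - f (flip k y)\<bar>)"
      using influential[OF Suc.prems] by auto
    have "insert k R \<subseteq> {..<N}" "z(k := 0) \<in> cube N" "z(k := 1) \<in> cube N"
      using Suc.prems k by (auto simp: cube_def)
    then obtain tr0 U0 tr1 U1 where "approximates_on n (insert k R) (z(k := 0)) tr0 U0"
      and "approximates_on n (insert k R) (z(k := 1)) tr1 U1"
      using Suc.IH by meson
    then show ?thesis using approximates_on_Query[OF Suc.prems k infl] by blast
  qed
qed

lemma accurate_tree_exists:
  assumes "0 < del" "0 < n" "e1 \<le> e * del / 2"
    and total: "(\<Sum>k<N. \<Sum>x\<in>cube N. (f x - f (flip k x))\<^sup>2) \<le> del / 2 * tau\<^sup>2 * real n * 2 ^ N"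
  shows "\<exists>tr. dt_depth tr \<le> n \<and> (1 - del) * 2 ^ N \<le> real (card {x \<in> cube N. \<bar>dt_eval tr x - f x\<bar> \<le> e})"
proof -
  have "(\<lambda>_. 0) \<in> cube N" by (simp add: cube_def)
  then obtain tr U where tr: "approximates_on n {} (\<lambda>_. 0) tr U"
    using approximating_tree_exists by blast
  then have "U \<subseteq> cube N" unfolding approximates_on_def by simp
  then have finU: "finite U" by (rule finite_subset) simp
  have "tau\<^sup>2 * real n * real (card U) \<le> tau\<^sup>2 * real n * (del / 2 * 2 ^ N)"
    using tr total unfolding approximates_on_def energy_def by (simp add: algebra_simps)
  then have cardU: "real (card U) \<le> del / 2 * 2 ^ N"
    using tau_pos assms(2) by (simp add: mult_le_cancel_left_pos)
  have "e * real (card (misses tr (cube N - U))) \<le> e1 * 2 ^ N"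
    using tr unfolding approximates_on_def by (simp add: card_cube)
  also have "\<dots> \<le> e * del / 2 * 2 ^ N"
    by (rule mult_right_mono[OF assms(3)]) simp
  finally have cardM: "real (card (misses tr (cube N - U))) \<le> del / 2 * 2 ^ N"
    using e_pos by (simp add: mult.assoc mult_le_cancel_left_pos)
  let ?G = "{x \<in> cube N. \<bar>dt_eval tr x - f x\<bar> \<le> e}"
  have "cube N \<subseteq> ?G \<union> U \<union> misses tr (cube N - U)"
    unfolding misses_def by auto
  then have "card (cube N) \<le> card (?G \<union> U \<union> misses tr (cube N - U))"
    by (rule card_mono[rotated]) (simp add: finU finite_misses)
  also have "\<dots> \<le> card ?G + card U + card (misses tr (cube N - U))"
    by (meson add_right_mono card_Un_le order_trans)
  finally have "card (cube N) \<le> card ?G + card U + card (misses tr (cube N - U))" .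
  from of_nat_mono[OF this, where 'a = real]
  have "2 ^ N \<le> real (card ?G) + real (card U) + real (card (misses tr (cube N - U)))"
    by (simp add: card_cube)
  then show ?thesis
    using tr cardU cardM unfolding approximates_on_def by (intro exI[of _ tr]) (auto simp: algebra_simps)
qed

end

lemma Vr_cong: "(\<And>x. x \<in> cube N \<Longrightarrow> p x = q x) \<Longrightarrow> Vr N p = Vr N q"
  unfolding Vr_def by simp

lemma Inf_cong: "(\<And>x. x \<in> cube N \<Longrightarrow> p x = q x) \<Longrightarrow> i < N \<Longrightarrow> Defs.Inf N i p = Defs.Inf N i q"
  unfolding Defs.Inf_def by (simp add: flip_in_cube)

lemma influential_coordinate_of_bpiv:
  assumes bpiv: "\<forall>N d p \<epsilon>. d \<ge> 1 \<longrightarrow> \<epsilon> > 0 \<longrightarrow> is_poly N d p \<longrightarrow>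
      (\<forall>x\<in>cube N. 0 \<le> p x \<and> p x \<le> 1) \<longrightarrow> Vr N p \<ge> \<epsilon> \<longrightarrow>
      (\<exists>i<N. Defs.Inf N i p \<ge> (\<epsilon> / real d) powr c)"
    and f: "fourier_degree_le N d f" "d \<ge> 1" "\<forall>x\<in>cube N. 0 \<le> f x \<and> f x \<le> 1"
    and e1: "0 < e1" and R: "R \<subseteq> {..<N}" and z: "z \<in> cube N" and var: "e1 \<le> subcube_var N f R z"
  shows "\<exists>k<N. k \<notin> R \<and>
    (e1 / real d) powr c * real (card (subcube N R z)) \<le> (\<Sum>y\<in>subcube N R z. \<bar>f y - f (flip k y)\<bar>)"
proof -
  let ?g = "\<lambda>x. f (fix_coords R z x)"
  obtain p where p: "is_poly N d p" "\<And>x. x \<in> cube N \<Longrightarrow> p x = ?g x"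
    using fourier_degree_le_imp_is_poly[OF fourier_degree_le_fix_coords[OF f(1) z]] by blast
  have p01: "\<forall>x\<in>cube N. 0 \<le> p x \<and> p x \<le> 1"
  proof
    fix x assume x: "x \<in> cube N"
    show "0 \<le> p x \<and> p x \<le> 1" using p(2)[OF x] f(3) fix_coords_in_cube[OF x z] by simp
  qed
  have "e1 \<le> Vr N p" using var by (simp only: Vr_cong[OF p(2)] Vr_fix_coords[OF R z])
  then obtain k where k: "k < N" and infl: "(e1 / real d) powr c \<le> Defs.Inf N k p"
    using bpiv[rule_format, OF f(2) e1 p(1)] p01 by blast
  have Ik: "Defs.Inf N k p = Defs.Inf N k ?g" by (rule Inf_cong[OF p(2) k])
  have "0 < (e1 / real d) powr c" using e1 f(2) by simp
  then have kR: "k \<notin> R" using infl Ik Inf_fix_coords_fixed[of k R N f z] by auto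
  then have "(e1 / real d) powr c \<le> (\<Sum>y\<in>subcube N R z. \<bar>f y - f (flip k y)\<bar>) / real (card (subcube N R z))"
    using infl Ik Inf_fix_coords_free[OF R z] by simp
  then show ?thesis
    using k kR card_subcube_pos[OF z] by (intro exI[of _ k]) (simp add: pos_le_divide_eq)
qed

lemma powr_le_power_ceiling:
  fixes x c :: real assumes "1 \<le> x" shows "x powr c \<le> x ^ nat \<lceil>c\<rceil>"
proof -
  have "x powr c \<le> x powr real (nat \<lceil>c\<rceil>)"
    using real_nat_ceiling_ge assms by (rule powr_mono)
  also have "\<dots> = x ^ nat \<lceil>c\<rceil>" using assms by (simp add: powr_realpow)
  finally show ?thesis .
qed

lemma depth_bound:
  fixes c eps del :: real and T :: nat
  assumes c: "0 < c" and eps: "0 < eps" and del: "0 < del"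
  defines "d \<equiv> real (2 * T + 1)" and "K \<equiv> 1 + real T + 1 / eps + 1 / del"
  defines "tau \<equiv> (eps * del / 2 / d) powr c" and "m \<equiv> nat \<lceil>2 * c\<rceil>"
  shows "real (nat \<lceil>8 * d / (tau\<^sup>2 * del)\<rceil>) \<le> (16 * 4 ^ m + 1) * K ^ (3 * m + 2)"
proof -
  have d: "1 \<le> d" "d \<le> 2 * K" and K: "1 \<le> K" "1 / eps \<le> K" "1 / del \<le> K"
    unfolding d_def K_def using eps del by auto
  define L where "L = d / (eps * del / 2)"
  have L: "0 < L" unfolding L_def using d eps del by simp
  have "tau\<^sup>2 = (eps * del / 2 / d) powr (2 * c)"
    unfolding tau_def using d eps del
    by (simp add: powr_powr[symmetric] powr_mult_base power2_eq_square powr_add[symmetric])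
  also have "\<dots> = 1 / L powr (2 * c)"
    unfolding L_def using d eps del by (simp add: powr_divide) (simp add: mult.commute)
  finally have "1 / tau\<^sup>2 = L powr (2 * c)" using L by simp
  also have "\<dots> \<le> (4 * K ^ 3) powr (2 * c)"
  proof (rule powr_mono2)
    have "L = 2 * d * (1 / eps) * (1 / del)" unfolding L_def by (simp add: field_simps)
    also have "\<dots> \<le> 2 * (2 * K) * K * K" using d K eps del by (intro mult_mono) auto
    finally show "L \<le> 4 * K ^ 3" by (simp add: power3_eq_cube)
  qed (use c L in auto)
  also have "\<dots> \<le> (4 * K ^ 3) ^ m"
    unfolding m_def using one_le_power[OF K(1), of 3] by (intro powr_le_power_ceiling) linarith
  finally have tau: "1 / tau\<^sup>2 \<le> 4 ^ m * K ^ (3 * m)"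
    by (simp add: power_mult_distrib power_mult)
  have "8 * d / (tau\<^sup>2 * del) = 8 * d * (1 / del) * (1 / tau\<^sup>2)" by simp
  also have "\<dots> \<le> 8 * (2 * K) * K * (4 ^ m * K ^ (3 * m))"
    using d K tau del by (intro mult_mono) auto
  also have "\<dots> = 16 * 4 ^ m * K ^ (3 * m + 2)"
    by (simp add: power_add power2_eq_square algebra_simps)
  finally have X: "8 * d / (tau\<^sup>2 * del) \<le> 16 * 4 ^ m * K ^ (3 * m + 2)" .
  have "0 \<le> 8 * d / (tau\<^sup>2 * del)" using d(1) del by simp
  then have "real (nat \<lceil>8 * d / (tau\<^sup>2 * del)\<rceil>) \<le> 8 * d / (tau\<^sup>2 * del) + 1"
    using of_int_ceiling_le_add_one[of "8 * d / (tau\<^sup>2 * del)"] by simp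
  then show ?thesis using X
    using one_le_power[OF K(1), of "3 * m + 2"] by (simp add: algebra_simps)
qed

lemma simulation_of_bpiv:
  assumes c: "0 < c" and bpiv: "\<forall>N d p \<epsilon>. d \<ge> 1 \<longrightarrow> \<epsilon> > 0 \<longrightarrow> is_poly N d p \<longrightarrow>
      (\<forall>x\<in>cube N. 0 \<le> p x \<and> p x \<le> 1) \<longrightarrow> Vr N p \<ge> \<epsilon> \<longrightarrow>
      (\<exists>i<N. Defs.Inf N i p \<ge> (\<epsilon> / real d) powr c)"
    and eps: "0 < eps" and del: "0 < del" and M: "1 \<le> M"
    and U: "\<forall>t\<le>T. unitary_on (qbasis N M) (Us t)" and Acc: "Acc \<subseteq> qbasis N M"
  defines "m \<equiv> nat \<lceil>2 * c\<rceil>"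
  shows "\<exists>tr. real (dt_depth tr) \<le> (16 * 4 ^ m + 1) * (1 + real T + 1 / eps + 1 / del) ^ (3 * m + 2) \<and>
      (1 - del) * 2 ^ N \<le> real (card {x \<in> cube N. \<bar>dt_eval tr x - acc_prob N M Us Acc T x\<bar> \<le> eps})"
proof -
  define f d where "f = acc_prob N M Us Acc T" and "d = 2 * T + 1"
  define tau where "tau = (eps * del / 2 / real d) powr c"
  define n where "n = nat \<lceil>8 * real d / (tau\<^sup>2 * del)\<rceil>"
  have deg: "fourier_degree_le N d f"
    unfolding f_def d_def by (rule fourier_degree_le_mono[OF fourier_degree_le_acc_prob[OF Acc]]) simp
  have bounded: "\<forall>x\<in>cube N. 0 \<le> f x \<and> f x \<le> 1"
    using acc_prob_bounded[OF M U Acc] by (simp add: f_def)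
  have tau: "0 < tau" using eps del by (simp add: tau_def d_def)
  have d: "1 \<le> d" by (simp add: d_def)
  interpret influential_subcubes N f tau eps "eps * del / 2"
    using tau eps del
      influential_coordinate_of_bpiv[OF bpiv deg d bounded, of "eps * del / 2", folded tau_def]
    by unfold_locales auto
  have n: "8 * real d / (tau\<^sup>2 * del) \<le> real n" "0 < n"
    unfolding n_def using tau del by (auto simp: d_def)
  have "(\<Sum>k<N. \<Sum>x\<in>cube N. (f x - f (flip k x))\<^sup>2) \<le> 4 * real d * 2 ^ N"
    using total_sq_influence_le[OF deg] bounded by auto
  also have "\<dots> \<le> del / 2 * tau\<^sup>2 * real n * 2 ^ N"
    using n(1) tau del by (simp add: field_simps)
  finally obtain tr where "dt_depth tr \<le> n"
    and "(1 - del) * 2 ^ N \<le> real (card {x \<in> cube N. \<bar>dt_eval tr x - f x\<bar> \<le> eps})"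
    using accurate_tree_exists[OF del n(2)] by auto
  moreover have "real n \<le> (16 * 4 ^ m + 1) * (1 + real T + 1 / eps + 1 / del) ^ (3 * m + 2)"
    unfolding n_def tau_def d_def m_def by (rule depth_bound[OF c eps del])
  ultimately show ?thesis
    unfolding f_def by (meson of_nat_le_iff order_trans)
qed

theorem theorem21:
  assumes "bpiv_conjecture"
  shows "\<exists>C::real. \<exists>k::nat. \<forall>(\<epsilon>::real) (\<delta>::real) (N::nat) (M::nat) (T::nat) Us Acc.
           \<epsilon> > 0 \<longrightarrow> \<delta> > 0 \<longrightarrow> M \<ge> 1 \<longrightarrow>
           (\<forall>t\<le>T. unitary_on (qbasis N M) (Us t)) \<longrightarrow> Acc \<subseteq> qbasis N M \<longrightarrow>
           (\<exists>tr. real (dt_depth tr) \<le> C * (1 + real T + 1 / \<epsilon> + 1 / \<delta>) ^ k \<and>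
                 real (card {x \<in> cube N. \<bar>dt_eval tr x - acc_prob N M Us Acc T x\<bar> \<le> \<epsilon>})
                   \<ge> (1 - \<delta>) * 2 ^ N)"
proof -
  obtain c where c: "c > 0" and bpiv: "\<forall>N d p \<epsilon>. d \<ge> 1 \<longrightarrow> \<epsilon> > 0 \<longrightarrow> is_poly N d p \<longrightarrow>
      (\<forall>x\<in>cube N. 0 \<le> p x \<and> p x \<le> 1) \<longrightarrow> Vr N p \<ge> \<epsilon> \<longrightarrow>
      (\<exists>i<N. Defs.Inf N i p \<ge> (\<epsilon> / real d) powr c)"
    using assms unfolding bpiv_conjecture_def by blast
  show ?thesis
    by (rule exI[of _ "16 * 4 ^ nat \<lceil>2 * c\<rceil> + 1"], rule exI[of _ "3 * nat \<lceil>2 * c\<rceil> + 2"],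
        intro allI impI, rule simulation_of_bpiv[OF c bpiv]) auto
qed

end
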